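(* Let $k\ge2$ and $n\le0$. Then $$\mathcal{F}_{n,k}(x)=\sum_{\substack{j_1,\dots,j_k\ge0\\ j_1+2j_2+\dots+kj_k=|n|+1-k}}(-1)^{J-j_k}\,\frac{J!}{j_1!\,j_2!\cdots j_k!}\,x^{|n|+1-k(1+j_k)},\qquad J=j_1+\dots+j_k,$$ where an empty sum is $0$.
   Context: For $k\ge2$, the polynomials $\mathcal{F}_{n,k}(x)\in\mathbb{Z}[x]$ ($n\in\mathbb{Z}$) are defined by $\mathcal{F}_{1,k}=1$, $\mathcal{F}_{n,k}=0$ for $n=0,-1,\dots,-(k-2)$, and $\mathcal{F}_{n,k}(x)=\sum_{j=1}^{k}x^{k-j}\mathcal{F}_{n-j,k}(x)$ for all $n\in\mathbb{Z}$. This recurrence is used upwards for $n\ge2$, and downwards for $n\le-(k-1)$ as $\mathcal{F}_{n,k}=\mathcal{F}_{n+k,k}-\sum_{j=1}^{k-1}x^j\mathcal{F}_{n+j,k}$. *)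

theory Defs
  imports "HOL-Computational_Algebra.Polynomial"
begin

text \<open>Base values:
  F_{1,k} = 1 and F_{n,k} = 0 for 2-k <= n <= 0; upward recurrence for n >= 2;
  downward recurrence for n <= 1-k.  (For k < 2, where the paper does not define
  the family, we set it to 0.)\<close>

function Fpoly :: "nat \<Rightarrow> int \<Rightarrow> int poly" where
  "Fpoly k n =
     (if k < 2 then 0
      else if n = 1 then 1
      else if 2 - int k \<le> n \<and> n \<le> 0 then 0
      else if n \<ge> 2 then (\<Sum>j\<in>{1..k}. monom 1 (k - j) * Fpoly k (n - int j))
      else Fpoly k (n + int k) - (\<Sum>j\<in>{1..k-1}. monom 1 j * Fpoly k (n + int j)))"
  by pat_completeness auto
termination
  by (relation "measure (\<lambda>(k, n). if k < 2 \<or> (2 - int k \<le> n \<and> n \<le> 1) then 0 else nat \<bar>n\<bar>)")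
     auto

end

theory Submission
  imports Defs
begin

text \<open>Put G(s) = F(1-k-s). Read downwards, the defining recurrence says
  G(s) = c(1) G(s-1) + ... + c(k) G(s-k) for s >= 0, where c(k) = 1 and c(i) = -x^i for i < k,
  while G(0) = 1 and G(s) = 0 for 1-k <= s < 0. The unique such sequence is the weighted count
  of ordered compositions of s into parts from {1..k}, a part i having weight c(i). Grouping the
  compositions by the multiplicities j(i) of their parts gives the sum over j of
  J!/(j(1)! ... j(k)!) * c(1)^j(1) * ... * c(k)^j(k), which is the claimed formula. That this sum
  obeys the recurrence comes from M(j) = M(j - e(1)) + ... + M(j - e(k)) for the multinomial
  coefficients M(j) = J!/(j(1)! ... j(k)!).\<close>

lemma sum_fun_upd:
  assumes "finite A" "i \<in> A"
  shows "(\<Sum>l\<in>A. g l ((f(i := v)) l)) = g i v + (\<Sum>l\<in>A - {i}. g l (f l))"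
proof -
  have "(\<Sum>l\<in>A - {i}. g l ((f(i := v)) l)) = (\<Sum>l\<in>A - {i}. g l (f l))"
    by (rule sum.cong) auto
  with assms show ?thesis
    by (simp add: sum.remove)
qed

lemma prod_fun_upd:
  assumes "finite A" "i \<in> A"
  shows "(\<Prod>l\<in>A. g l ((f(i := v)) l)) = g i v * (\<Prod>l\<in>A - {i}. g l (f l))"
proof -
  have "(\<Prod>l\<in>A - {i}. g l ((f(i := v)) l)) = (\<Prod>l\<in>A - {i}. g l (f l))"
    by (rule prod.cong) auto
  with assms show ?thesis
    by (simp add: prod.remove)
qed

lemma prod_power_fun_upd_Suc:
  assumes "finite A" "i \<in> A"
  shows "(\<Prod>l\<in>A. c l ^ (j(i := Suc (j i))) l) = c i * (\<Prod>l\<in>A. c l ^ j l)"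
  using prod_fun_upd[OF assms, of "\<lambda>l x. c l ^ x" j "Suc (j i)"]
    prod.remove[OF assms, of "\<lambda>l. c l ^ j l"] by (simp add: mult.assoc)

definition multinomial :: "'i set \<Rightarrow> ('i \<Rightarrow> nat) \<Rightarrow> nat" where
  "multinomial A j = fact (\<Sum>i\<in>A. j i) div (\<Prod>i\<in>A. fact (j i))"

lemma prod_fact_dvd_fact_sum:
  "finite A \<Longrightarrow> (\<Prod>i\<in>A. fact (j i) :: nat) dvd fact (\<Sum>i\<in>A. j i)"
proof (induction A rule: finite_induct)
  case (insert x A)
  have "fact (j x) * (\<Prod>i\<in>A. fact (j i)) dvd fact (j x) * (fact (\<Sum>i\<in>A. j i) :: nat)"
    using insert.IH by (rule mult_dvd_mono[OF dvd_refl])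
  also have "\<dots> dvd fact (j x + (\<Sum>i\<in>A. j i))"
    by (rule fact_fact_dvd_fact)
  finally show ?case
    using insert by simp
qed simp

lemma multinomial_mult_prod_fact:
  "finite A \<Longrightarrow> multinomial A j * (\<Prod>i\<in>A. fact (j i)) = fact (\<Sum>i\<in>A. j i)"
  unfolding multinomial_def by (simp add: prod_fact_dvd_fact_sum)

lemma multinomial_rec:
  assumes A: "finite A" and pos: "(\<Sum>i\<in>A. j i) > 0"
  shows "multinomial A j = (\<Sum>i\<in>A. if j i > 0 then multinomial A (j(i := j i - 1)) else 0)"
proof -
  define J where "J = (\<Sum>i\<in>A. j i)"
  define P where "P = (\<lambda>j. \<Prod>i\<in>A. fact (j i) :: nat)"
  have summand: "j i * fact (J - 1) = (if j i > 0 then multinomial A (j(i := j i - 1)) else 0) * P j"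
    if i: "i \<in> A" for i
  proof (cases "j i > 0")
    case True
    let ?j' = "j(i := j i - 1)"
    have "(\<Sum>l\<in>A. ?j' l) = J - 1"
      using sum_fun_upd[OF A i, of "\<lambda>_ x. x" j] sum.remove[OF A i, of j] True
      unfolding J_def by simp
    then have "fact (J - 1) = multinomial A ?j' * P ?j'"
      using multinomial_mult_prod_fact[OF A, of ?j'] unfolding P_def by simp
    moreover have "j i * P ?j' = P j"
      using prod_fun_upd[OF A i, of "\<lambda>_ x. fact x :: nat" j "j i - 1"]
        prod.remove[OF A i, of "\<lambda>l. fact (j l) :: nat"] fact_reduce[OF True, where 'a=nat]
      unfolding P_def by (simp add: ac_simps)
    ultimately have "j i * fact (J - 1) = multinomial A ?j' * P j"
      by (metis mult.left_commute)
    with True show ?thesis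
      by simp
  qed simp
  have "multinomial A j * P j = J * fact (J - 1)"
    using multinomial_mult_prod_fact[OF A] fact_reduce[of J, where 'a=nat] pos
    unfolding P_def J_def by simp
  also have "\<dots> = (\<Sum>i\<in>A. j i * fact (J - 1))"
    unfolding J_def by (simp add: sum_distrib_right)
  also have "\<dots> = (\<Sum>i\<in>A. if j i > 0 then multinomial A (j(i := j i - 1)) else 0) * P j"
    unfolding sum_distrib_right by (rule sum.cong[OF refl summand])
  finally have "multinomial A j * P j = \<dots>" .
  moreover have "P j > 0"
    unfolding P_def by (simp add: prod_pos)
  ultimately show ?thesis
    by simp
qed

definition bounded_partitions :: "nat \<Rightarrow> int \<Rightarrow> (nat \<Rightarrow> nat) set" where
  "bounded_partitions k s =
     {j. (\<forall>i. i \<notin> {1..k} \<longrightarrow> j i = 0) \<and> int (\<Sum>i=1..k. i * j i) = s}"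

lemma finite_bounded_partitions: "finite (bounded_partitions k s)"
proof -
  let ?F = "{f. \<forall>x. (x \<in> {1..k} \<longrightarrow> f x \<in> {0..nat s}) \<and> (x \<notin> {1..k} \<longrightarrow> f x = 0)}"
  have "bounded_partitions k s \<subseteq> ?F"
  proof safe
    fix f x assume f: "f \<in> bounded_partitions k s" and x: "x \<in> {1..k}"
    have "f x \<le> x * f x"
      using x by simp
    also have "\<dots> \<le> (\<Sum>i=1..k. i * f i)"
      by (rule member_le_sum) (use x in auto)
    finally show "f x \<in> {0..nat s}"
      using f unfolding bounded_partitions_def by (auto simp del: of_nat_sum)
  qed (auto simp: bounded_partitions_def)
  moreover have "finite ?F"
    by (rule finite_set_of_finite_funs) auto
  ultimately show ?thesis
    by (rule finite_subset)
qed

lemma bounded_partitions_neg: "s < 0 \<Longrightarrow> bounded_partitions k s = {}"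
  unfolding bounded_partitions_def by (auto simp del: of_nat_sum)

lemma bounded_partitions_0: "bounded_partitions k 0 = {\<lambda>_. 0}"
proof -
  have "j i = 0" if "j \<in> bounded_partitions k 0" for j i
  proof (cases "i \<in> {1..k}")
    case True
    have "i * j i \<le> (\<Sum>l=1..k. l * j l)"
      by (rule member_le_sum) (use True in auto)
    with that True show ?thesis
      unfolding bounded_partitions_def by (auto simp del: of_nat_sum)
  qed (use that in \<open>auto simp: bounded_partitions_def\<close>)
  then show ?thesis
    unfolding bounded_partitions_def by auto
qed

lemma sum_mult_fun_upd_Suc:
  assumes "i \<in> {1..k}"
  shows "(\<Sum>l=1..k. l * (j(i := Suc (j i))) l) = (\<Sum>l=1..k. l * j l) + i"
  using sum_fun_upd[OF _ assms, of "\<lambda>l x. l * x" j "Suc (j i)"]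
    sum.remove[OF _ assms, of "\<lambda>l. l * j l"] by simp

lemma bij_betw_bounded_partitions_Suc:
  assumes i: "i \<in> {1..k}"
  shows "bij_betw (\<lambda>j. j(i := Suc (j i)))
           (bounded_partitions k (s - int i)) {j \<in> bounded_partitions k s. j i > 0}"
proof (rule bij_betw_byWitness[where f' = "\<lambda>j. j(i := j i - 1)"])
  show "(\<lambda>j. j(i := Suc (j i))) ` bounded_partitions k (s - int i)
          \<subseteq> {j \<in> bounded_partitions k s. j i > 0}"
    using i sum_mult_fun_upd_Suc[OF i] by (auto simp: bounded_partitions_def simp del: of_nat_sum)
  show "(\<lambda>j. j(i := j i - 1)) ` {j \<in> bounded_partitions k s. j i > 0}
          \<subseteq> bounded_partitions k (s - int i)"
  proof clarify
    fix j assume j: "j \<in> bounded_partitions k s" "j i > 0"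
    let ?j' = "j(i := j i - 1)"
    have "j = ?j'(i := Suc (?j' i))"
      using j(2) by auto
    then have "(\<Sum>l=1..k. l * j l) = (\<Sum>l=1..k. l * ?j' l) + i"
      using sum_mult_fun_upd_Suc[OF i, of ?j'] by metis
    with i j(1) show "?j' \<in> bounded_partitions k (s - int i)"
      unfolding bounded_partitions_def by (auto simp del: of_nat_sum)
  qed
qed auto

definition composition_sum :: "(nat \<Rightarrow> 'a::comm_semiring_1) \<Rightarrow> nat \<Rightarrow> int \<Rightarrow> 'a" where
  "composition_sum c k s =
     (\<Sum>j\<in>bounded_partitions k s. of_nat (multinomial {1..k} j) * (\<Prod>i=1..k. c i ^ j i))"

lemma composition_sum_neg: "s < 0 \<Longrightarrow> composition_sum c k s = 0"
  unfolding composition_sum_def by (simp add: bounded_partitions_neg)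

lemma composition_sum_0: "composition_sum c k 0 = 1"
  unfolding composition_sum_def bounded_partitions_0 multinomial_def by simp

lemma composition_sum_rec:
  assumes "s > 0"
  shows "composition_sum c k s = (\<Sum>i=1..k. c i * composition_sum c k (s - int i))"
proof -
  let ?C = "\<lambda>j. \<Prod>l=1..k. c l ^ j l"
  let ?M = "multinomial {1..k}"
  have split: "of_nat (?M j) * ?C j =
      (\<Sum>i=1..k. if j i > 0 then of_nat (?M (j(i := j i - 1))) * ?C j else 0)"
    if j: "j \<in> bounded_partitions k s" for j
  proof -
    have "(\<Sum>i=1..k. j i) > 0"
    proof (rule ccontr)
      assume "\<not> (\<Sum>i=1..k. j i) > 0"
      then have "(\<Sum>i=1..k. i * j i) = 0"
        by simp
      with j \<open>s > 0\<close> show False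
        unfolding bounded_partitions_def by (simp del: of_nat_sum)
    qed
    then have "?M j = (\<Sum>i=1..k. if j i > 0 then ?M (j(i := j i - 1)) else 0)"
      by (rule multinomial_rec[OF finite_atLeastAtMost])
    then show ?thesis
      by (auto simp: sum_distrib_right intro!: sum.cong)
  qed
  have part: "(\<Sum>j\<in>{j \<in> bounded_partitions k s. j i > 0}. of_nat (?M (j(i := j i - 1))) * ?C j)
      = c i * composition_sum c k (s - int i)" if i: "i \<in> {1..k}" for i
  proof -
    have C_Suc: "?C (j(i := Suc (j i))) = c i * ?C j" for j
      using prod_power_fun_upd_Suc[of "{1..k}" i c j] i by simp
    have "(\<Sum>j\<in>{j \<in> bounded_partitions k s. j i > 0}. of_nat (?M (j(i := j i - 1))) * ?C j)
        = (\<Sum>j\<in>bounded_partitions k (s - int i). of_nat (?M j) * ?C (j(i := Suc (j i))))"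
      by (simp add: sum.reindex_bij_betw[OF bij_betw_bounded_partitions_Suc[OF i], symmetric])
    also have "\<dots> = c i * composition_sum c k (s - int i)"
      unfolding composition_sum_def C_Suc by (simp add: sum_distrib_left ac_simps)
    finally show ?thesis .
  qed
  have "composition_sum c k s =
      (\<Sum>j\<in>bounded_partitions k s. \<Sum>i=1..k. if j i > 0 then of_nat (?M (j(i := j i - 1))) * ?C j else 0)"
    unfolding composition_sum_def by (rule sum.cong[OF refl split])
  also have "\<dots> = (\<Sum>i=1..k. \<Sum>j\<in>bounded_partitions k s.
      if j i > 0 then of_nat (?M (j(i := j i - 1))) * ?C j else 0)"
    by (rule sum.swap)
  also have "\<dots> = (\<Sum>i=1..k. c i * composition_sum c k (s - int i))"
    by (rule sum.cong[OF refl]) (simp only: part sum.inter_filter[OF finite_bounded_partitions, symmetric])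
  finally show ?thesis .
qed

declare Fpoly.simps [simp del]

lemma Fpoly_1: "k \<ge> 2 \<Longrightarrow> Fpoly k 1 = 1"
  by (simp add: Fpoly.simps)

lemma Fpoly_eq_0: "k \<ge> 2 \<Longrightarrow> 2 - int k \<le> n \<Longrightarrow> n \<le> 0 \<Longrightarrow> Fpoly k n = 0"
  by (simp add: Fpoly.simps)

definition Fpoly_down_coeff :: "nat \<Rightarrow> nat \<Rightarrow> int poly" where
  "Fpoly_down_coeff k i = (if i = k then 1 else - monom 1 i)"

lemma sum_Fpoly_down_coeff:
  assumes "k \<ge> 1"
  shows "(\<Sum>i=1..k. Fpoly_down_coeff k i * g i) = g k - (\<Sum>i=1..k-1. monom 1 i * g i)"
proof -
  have "{1..k} = insert k {1..k-1}"
    using assms by auto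
  moreover have "(\<Sum>i=1..k-1. Fpoly_down_coeff k i * g i) = - (\<Sum>i=1..k-1. monom 1 i * g i)"
    unfolding sum_negf[symmetric] by (rule sum.cong) (auto simp: Fpoly_down_coeff_def)
  ultimately show ?thesis
    using assms by (simp add: Fpoly_down_coeff_def)
qed

lemma Fpoly_down_rec:
  assumes k: "k \<ge> 2" and s: "s \<ge> 0"
  shows "Fpoly k (1 - int k - s) = (\<Sum>i=1..k. Fpoly_down_coeff k i * Fpoly k (1 - int k - (s - int i)))"
proof -
  have "Fpoly k (1 - int k - s) =
      Fpoly k (1 - s) - (\<Sum>i=1..k-1. monom 1 i * Fpoly k (1 - int k - (s - int i)))"
    using k s by (subst Fpoly.simps) (simp add: algebra_simps)
  moreover have "k \<ge> 1"
    using k by simp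
  ultimately show ?thesis
    by (subst sum_Fpoly_down_coeff) simp_all
qed

lemma Fpoly_eq_composition_sum:
  assumes k: "k \<ge> 2"
  shows "s \<ge> 1 - int k \<Longrightarrow> Fpoly k (1 - int k - s) = composition_sum (Fpoly_down_coeff k) k s"
proof (induction "nat (s + int k)" arbitrary: s rule: less_induct)
  case less
  consider "s < 0" | "s = 0" | "s > 0"
    by linarith
  then show ?case
  proof cases
    case 1
    with k less.prems show ?thesis
      by (simp add: Fpoly_eq_0 composition_sum_neg)
  next
    case 2
    have "(\<Sum>i=1..k-1. monom 1 i * Fpoly k (1 - int k + int i)) = 0"
      by (rule sum.neutral) (use k in \<open>auto simp: Fpoly_eq_0\<close>)
    then have "Fpoly k (1 - int k) = 1"
      using k by (subst Fpoly.simps) (simp add: Fpoly_1)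
    then show ?thesis
      using 2 by (simp add: composition_sum_0)
  next
    case 3
    have "Fpoly k (1 - int k - (s - int i)) = composition_sum (Fpoly_down_coeff k) k (s - int i)"
      if "i \<in> {1..k}" for i
      using less.hyps[of "s - int i"] that 3 k by simp
    with 3 show ?thesis
      by (simp add: Fpoly_down_rec[OF k] composition_sum_rec)
  qed
qed

lemma prod_neg_monom_power:
  "finite B \<Longrightarrow> (\<Prod>i\<in>B. (- monom 1 i) ^ j i :: 'a::comm_ring_1 poly)
     = monom ((-1) ^ (\<Sum>i\<in>B. j i)) (\<Sum>i\<in>B. i * j i)"
  by (induction B rule: finite_induct) (simp_all add: minus_monom monom_power mult_monom power_add)

lemma prod_Fpoly_down_coeff_power:
  assumes k: "k \<ge> 1" and j: "j \<in> bounded_partitions k s"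
  shows "(\<Prod>i=1..k. Fpoly_down_coeff k i ^ j i) =
    monom ((-1) ^ ((\<Sum>i=1..k. j i) - j k)) (nat (s - int k * int (j k)))"
proof -
  have ks: "{1..k} = insert k {1..k-1}"
    using k by auto
  have split_k: "(\<Sum>i=1..k. f i) = f k + (\<Sum>i=1..k-1. f i)" for f :: "nat \<Rightarrow> nat"
    using ks k by simp
  have "(\<Prod>i=1..k. Fpoly_down_coeff k i ^ j i) = (\<Prod>i=1..k-1. (- monom 1 i) ^ j i)"
    using ks k by (auto simp: Fpoly_down_coeff_def intro!: prod.cong)
  also have "\<dots> = monom ((-1) ^ (\<Sum>i=1..k-1. j i)) (\<Sum>i=1..k-1. i * j i)"
    by (rule prod_neg_monom_power) simp
  also have "(\<Sum>i=1..k-1. j i) = (\<Sum>i=1..k. j i) - j k"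
    using split_k[of j] by simp
  also have "(\<Sum>i=1..k-1. i * j i) = nat (s - int k * int (j k))"
  proof -
    have "int (\<Sum>i=1..k-1. i * j i) = s - int k * int (j k)"
      using j split_k[of "\<lambda>i. i * j i"] unfolding bounded_partitions_def by (simp del: of_nat_sum)
    then show ?thesis
      by (metis nat_int)
  qed
  finally show ?thesis .
qed

lemma composition_sum_Fpoly_down_coeff:
  assumes k: "k \<ge> 1"
  shows "composition_sum (Fpoly_down_coeff k) k s =
    (\<Sum>j\<in>bounded_partitions k s.
       let J = (\<Sum>i=1..k. j i) in
       monom ((-1) ^ (J - j k) * int (fact J div (\<Prod>i=1..k. fact (j i))))
             (nat (s - int k * int (j k))))"
  unfolding composition_sum_def
proof (rule sum.cong[OF refl])
  fix j assume "j \<in> bounded_partitions k s"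
  from prod_Fpoly_down_coeff_power[OF k this]
  show "of_nat (multinomial {1..k} j) * (\<Prod>i=1..k. Fpoly_down_coeff k i ^ j i) =
    (let J = (\<Sum>i=1..k. j i) in
       monom ((-1) ^ (J - j k) * int (fact J div (\<Prod>i=1..k. fact (j i))))
             (nat (s - int k * int (j k))))"
    by (simp add: multinomial_def of_nat_monom mult_monom Let_def mult.commute)
qed

theorem mainTheorem7:
  fixes k :: nat and n :: int
  assumes "k \<ge> 2" and "n \<le> 0"
  shows "Fpoly k n =
    (\<Sum>j\<in>{j :: nat \<Rightarrow> nat. (\<forall>i. i \<notin> {1..k} \<longrightarrow> j i = 0) \<and>
                  int (\<Sum>i=1..k. i * j i) = \<bar>n\<bar> + 1 - int k}.
       let J = (\<Sum>i=1..k. j i) in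
       monom ((-1) ^ (J - j k) * int (fact J div (\<Prod>i=1..k. fact (j i))))
             (nat (\<bar>n\<bar> + 1 - int k * (1 + int (j k)))))"
proof -
  let ?s = "\<bar>n\<bar> + 1 - int k"
  have "Fpoly k n = composition_sum (Fpoly_down_coeff k) k ?s"
    using Fpoly_eq_composition_sum[OF assms(1), of ?s] assms by simp
  also have "\<dots> = (\<Sum>j\<in>bounded_partitions k ?s.
       let J = (\<Sum>i=1..k. j i) in
       monom ((-1) ^ (J - j k) * int (fact J div (\<Prod>i=1..k. fact (j i))))
             (nat (?s - int k * int (j k))))"
    using assms(1) by (simp add: composition_sum_Fpoly_down_coeff)
  finally show ?thesis
    unfolding bounded_partitions_def by (simp only: diff_diff_eq distrib_left mult_1_right)
qed

end
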